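(* Let $(G,\tau,\partial)$ be a Polish topometric group with the Steinhaus property, and let $H$ be a second countable topological group. If $\varphi\colon(G,\partial)\to H$ is a continuous group homomorphism, then $\varphi\colon(G,\tau)\to H$ is continuous.
   Context: A Polish topometric group is a triple $(G,\tau,\partial)$ with $(G,\tau)$ a Polish group, $\partial$ a bi-invariant metric whose topology refines $\tau$ and which is $\tau$-lower semi-continuous. For $A\subseteq G$, $(A)_\varepsilon=\{g\colon\partial(g,A)<\varepsilon\}$. A subset $A$ of $G$ is $\sigma$-syndetic if $G$ is covered by countably many left translates of $A$. The topometric group $G$ has the Steinhaus property if there is an integer $k$ such that for every symmetric $\sigma$-syndetic $A\subseteq G$ and every $\varepsilon>0$, $1_G\in\mathrm{Int}_\tau\big((A^k)_\varepsilon\big)$. *)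

theory Defs
  imports "HOL-Analysis.Analysis" "HOL-Algebra.Coset"
begin

definition Polish_space :: "'a topology \<Rightarrow> bool" where
  "Polish_space X \<longleftrightarrow> completely_metrizable_space X \<and> separable_space X"

definition topological_group :: "('a, 'b) monoid_scheme \<Rightarrow> 'a topology \<Rightarrow> bool" where
  "topological_group G X \<longleftrightarrow> group G \<and> topspace X = carrier G \<and>
     continuous_map (prod_topology X X) X (\<lambda>p. fst p \<otimes>\<^bsub>G\<^esub> snd p) \<and>
     continuous_map X X (\<lambda>x. inv\<^bsub>G\<^esub> x)"

definition Polish_group :: "('a, 'b) monoid_scheme \<Rightarrow> 'a topology \<Rightarrow> bool" where
  "Polish_group G X \<longleftrightarrow> topological_group G X \<and> Polish_space X"

definition Polish_topometric_group ::
  "('a, 'b) monoid_scheme \<Rightarrow> 'a topology \<Rightarrow> ('a \<Rightarrow> 'a \<Rightarrow> real) \<Rightarrow> bool" where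
  "Polish_topometric_group G X d \<longleftrightarrow> Polish_group G X \<and>
     Metric_space (carrier G) d \<and>
     (\<forall>g\<in>carrier G. \<forall>x\<in>carrier G. \<forall>y\<in>carrier G.
        d (g \<otimes>\<^bsub>G\<^esub> x) (g \<otimes>\<^bsub>G\<^esub> y) = d x y \<and> d (x \<otimes>\<^bsub>G\<^esub> g) (y \<otimes>\<^bsub>G\<^esub> g) = d x y) \<and>
     (\<forall>U. openin X U \<longrightarrow> openin (Metric_space.mtopology (carrier G) d) U) \<and>
     (\<forall>r. openin (prod_topology X X)
            {p \<in> topspace (prod_topology X X). r < d (fst p) (snd p)})"

fun set_pow :: "('a, 'b) monoid_scheme \<Rightarrow> 'a set \<Rightarrow> nat \<Rightarrow> 'a set" where
  "set_pow G A 0 = {\<one>\<^bsub>G\<^esub>}"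
| "set_pow G A (Suc n) = set_pow G A n <#>\<^bsub>G\<^esub> A"

text \<open>(A)_eps = {g. d(g,A) < eps}; d(g,A) = inf over a in A of d g a, which is < eps iff some
  a in A has d g a < eps.\<close>
definition metric_nbhd :: "('a, 'b) monoid_scheme \<Rightarrow> ('a \<Rightarrow> 'a \<Rightarrow> real) \<Rightarrow> 'a set \<Rightarrow> real \<Rightarrow> 'a set" where
  "metric_nbhd G d A \<epsilon> = {g \<in> carrier G. \<exists>a\<in>A. d g a < \<epsilon>}"

definition sigma_syndetic :: "('a, 'b) monoid_scheme \<Rightarrow> 'a set \<Rightarrow> bool" where
  "sigma_syndetic G A \<longleftrightarrow>
     (\<exists>S. countable S \<and> S \<subseteq> carrier G \<and> carrier G \<subseteq> (\<Union>g\<in>S. g <#\<^bsub>G\<^esub> A))"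

definition Steinhaus_property ::
  "('a, 'b) monoid_scheme \<Rightarrow> 'a topology \<Rightarrow> ('a \<Rightarrow> 'a \<Rightarrow> real) \<Rightarrow> bool" where
  "Steinhaus_property G X d \<longleftrightarrow>
     (\<exists>k::nat. \<forall>A. A \<subseteq> carrier G \<longrightarrow> set_inv\<^bsub>G\<^esub> A = A \<longrightarrow> sigma_syndetic G A \<longrightarrow>
        (\<forall>\<epsilon>>0. \<one>\<^bsub>G\<^esub> \<in> X interior_of (metric_nbhd G d (set_pow G A k) \<epsilon>)))"

end

theory Submission
  imports Defs
begin

text \<open>By translation it suffices to prove continuity at the identity. Given an open \<open>W \<ni> 1\<close> in \<open>H\<close>,
  choose a symmetric open \<open>V \<ni> 1\<close> with \<open>V\<^sup>k\<^sup>+\<^sup>1 \<subseteq> W\<close>. Second countability of \<open>H\<close> makes countably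
  many translates \<open>\<phi>(c)V\<close> cover \<open>\<phi>(G)\<close>, so \<open>A = \<phi>\<^sup>-\<^sup>1(V)\<close> is symmetric and \<open>\<sigma>\<close>-syndetic.
  By \<open>\<partial>\<close>-continuity some ball \<open>B\<^sub>\<epsilon>(1)\<close> maps into \<open>V\<close>, and by left invariance of \<open>\<partial>\<close> every
  \<open>g\<close> with \<open>\<partial>(g, a) < \<epsilon>\<close> for some \<open>a \<in> A\<^sup>k\<close> lies in \<open>a B\<^sub>\<epsilon>(1)\<close>; hence
  \<open>\<phi>((A\<^sup>k)\<^sub>\<epsilon>) \<subseteq> V\<^sup>k\<^sup>+\<^sup>1 \<subseteq> W\<close>, and the Steinhaus property says that \<open>(A\<^sup>k)\<^sub>\<epsilon>\<close> is a
  \<open>\<tau>\<close>-neighbourhood of \<open>1\<close>.\<close>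

lemma set_pow_mono: "A \<subseteq> B \<Longrightarrow> set_pow G A n \<subseteq> set_pow G B n"
  by (induction n) (auto simp: set_mult_def)

lemma set_pow_subset_carrier:
  assumes "group G" "A \<subseteq> carrier G"
  shows "set_pow G A n \<subseteq> carrier G"
proof (induction n)
  case 0
  then show ?case using assms(1) by (simp add: group.is_monoid monoid.one_closed)
next
  case (Suc n)
  then show ?case
    using assms monoid.m_closed[OF group.is_monoid[OF assms(1)]] by (auto simp: set_mult_def)
qed

lemma image_set_pow_subset:
  assumes "group_hom G H f" "A \<subseteq> carrier G"
  shows "f ` set_pow G A n \<subseteq> set_pow H (f ` A) n"
proof (induction n)
  case 0
  then show ?case using assms(1) by (simp add: group_hom.hom_one)
next
  case (Suc n)
  have "set_pow G A n \<subseteq> carrier G"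
    using set_pow_subset_carrier assms group_hom.axioms(1) by blast
  then have "f (a \<otimes>\<^bsub>G\<^esub> b) = f a \<otimes>\<^bsub>H\<^esub> f b" if "a \<in> set_pow G A n" "b \<in> A" for a b
    using that assms by (blast intro: group_hom.hom_mult)
  with Suc show ?case unfolding set_pow.simps set_mult_def by blast
qed

lemma topological_group_continuous_map_left_mult:
  assumes "topological_group G X" "c \<in> carrier G"
  shows "continuous_map X X (\<lambda>y. c \<otimes>\<^bsub>G\<^esub> y)"
proof -
  have mult: "continuous_map (prod_topology X X) X (\<lambda>p. fst p \<otimes>\<^bsub>G\<^esub> snd p)"
    and "topspace X = carrier G" using assms unfolding topological_group_def by auto
  then have "continuous_map X (prod_topology X X) (\<lambda>y. (c, y))"
    using assms(2) by (intro continuous_map_pairedI) auto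
  from continuous_map_compose[OF this mult] show ?thesis by (simp add: o_def)
qed

lemma topological_group_nbhd_one_set_pow:
  assumes "topological_group H Y" "openin Y W" "\<one>\<^bsub>H\<^esub> \<in> W"
  shows "\<exists>V. openin Y V \<and> \<one>\<^bsub>H\<^esub> \<in> V \<and> set_pow H V n \<subseteq> W"
  using assms(2,3)
proof (induction n arbitrary: W)
  case 0
  then show ?case by (intro exI[of _ "topspace Y"]) (auto dest: openin_subset)
next
  case (Suc n)
  have mult: "continuous_map (prod_topology Y Y) Y (\<lambda>p. fst p \<otimes>\<^bsub>H\<^esub> snd p)"
    and "topspace Y = carrier H" "group H"
    using assms(1) unfolding topological_group_def by auto
  let ?P = "{p \<in> topspace (prod_topology Y Y). fst p \<otimes>\<^bsub>H\<^esub> snd p \<in> W}"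
  have "openin (prod_topology Y Y) ?P"
    using mult Suc.prems(1) openin_continuous_map_preimage by blast
  moreover have "(\<one>\<^bsub>H\<^esub>, \<one>\<^bsub>H\<^esub>) \<in> ?P"
    using Suc.prems \<open>topspace Y = carrier H\<close> \<open>group H\<close> by (simp add: group.is_monoid)
  ultimately obtain V1 V2 where V: "openin Y V1" "openin Y V2" "\<one>\<^bsub>H\<^esub> \<in> V1" "\<one>\<^bsub>H\<^esub> \<in> V2"
      "V1 \<times> V2 \<subseteq> ?P"
    using openin_prod_topology_alt[of Y Y ?P] by meson
  obtain V3 where V3: "openin Y V3" "\<one>\<^bsub>H\<^esub> \<in> V3" "set_pow H V3 n \<subseteq> V1"
    using Suc.IH[OF V(1,3)] by blast
  have "set_pow H (V3 \<inter> V2) n \<subseteq> V1"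
    using V3(3) set_pow_mono[of "V3 \<inter> V2" V3] by blast
  have "a \<otimes>\<^bsub>H\<^esub> b \<in> W" if "a \<in> set_pow H (V3 \<inter> V2) n" "b \<in> V3 \<inter> V2" for a b
  proof -
    have "(a, b) \<in> V1 \<times> V2" using that \<open>set_pow H (V3 \<inter> V2) n \<subseteq> V1\<close> by blast
    then have "(a, b) \<in> ?P" by (rule subsetD[OF V(5)])
    then show ?thesis by simp
  qed
  then have "set_pow H (V3 \<inter> V2) (Suc n) \<subseteq> W"
    unfolding set_pow.simps set_mult_def by blast
  then show ?case using V V3 by (intro exI[of _ "V3 \<inter> V2"]) auto
qed

lemma topological_group_symmetric_nbhd:
  assumes "topological_group H Y" "openin Y V" "\<one>\<^bsub>H\<^esub> \<in> V"
  shows "\<exists>V'. openin Y V' \<and> \<one>\<^bsub>H\<^esub> \<in> V' \<and> V' \<subseteq> V \<and> (\<forall>y\<in>V'. inv\<^bsub>H\<^esub> y \<in> V')"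
proof -
  have "group H" "topspace Y = carrier H" "continuous_map Y Y (\<lambda>y. inv\<^bsub>H\<^esub> y)"
    using assms(1) unfolding topological_group_def by auto
  let ?V' = "{y \<in> carrier H. y \<in> V \<and> inv\<^bsub>H\<^esub> y \<in> V}"
  have "openin Y (V \<inter> {y \<in> topspace Y. inv\<^bsub>H\<^esub> y \<in> V})"
    using assms(2) \<open>continuous_map Y Y _\<close> openin_continuous_map_preimage by blast
  moreover have "V \<inter> {y \<in> topspace Y. inv\<^bsub>H\<^esub> y \<in> V} = ?V'"
    using \<open>topspace Y = carrier H\<close> by auto
  moreover have "\<one>\<^bsub>H\<^esub> \<in> ?V'"
    using assms(3) \<open>group H\<close> by (simp add: group.is_monoid monoid.inv_one)
  moreover have "inv\<^bsub>H\<^esub> y \<in> ?V'" if "y \<in> ?V'" for y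
    using that \<open>group H\<close> by (simp add: group.inv_inv)
  ultimately show ?thesis by (intro exI[of _ ?V']) auto
qed

lemma set_inv_hom_preimage:
  assumes "group_hom G H f" "\<And>y. y \<in> V \<Longrightarrow> inv\<^bsub>H\<^esub> y \<in> V"
  shows "set_inv\<^bsub>G\<^esub> {g \<in> carrier G. f g \<in> V} = {g \<in> carrier G. f g \<in> V}"
proof -
  interpret f: group_hom G H f by (rule assms(1))
  have inv_mem: "inv\<^bsub>G\<^esub> g \<in> {g \<in> carrier G. f g \<in> V}" if "g \<in> {g \<in> carrier G. f g \<in> V}" for g
    using that assms(2) by (simp add: f.hom_inv)
  show ?thesis
  proof
    show "set_inv\<^bsub>G\<^esub> {g \<in> carrier G. f g \<in> V} \<subseteq> {g \<in> carrier G. f g \<in> V}"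
      unfolding SET_INV_def using inv_mem by blast
    show "{g \<in> carrier G. f g \<in> V} \<subseteq> set_inv\<^bsub>G\<^esub> {g \<in> carrier G. f g \<in> V}"
    proof
      fix g assume "g \<in> {g \<in> carrier G. f g \<in> V}"
      then have "g = inv\<^bsub>G\<^esub> (inv\<^bsub>G\<^esub> g)" "inv\<^bsub>G\<^esub> g \<in> {g \<in> carrier G. f g \<in> V}"
        using inv_mem by simp_all
      then show "g \<in> set_inv\<^bsub>G\<^esub> {g \<in> carrier G. f g \<in> V}" unfolding SET_INV_def by blast
    qed
  qed
qed

lemma sigma_syndetic_hom_preimage:
  assumes "topological_group H Y" "second_countable Y" "group_hom G H f"
    and "openin Y V" "\<one>\<^bsub>H\<^esub> \<in> V"
  shows "sigma_syndetic G {g \<in> carrier G. f g \<in> V}"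
proof -
  interpret f: group_hom G H f by (rule assms(3))
  have "topspace Y = carrier H" using assms(1) unfolding topological_group_def by auto
  define T where "T g = {y \<in> topspace Y. inv\<^bsub>H\<^esub> (f g) \<otimes>\<^bsub>H\<^esub> y \<in> V}" for g
  have T_open: "openin Y (T g)" if "g \<in> carrier G" for g
  proof -
    have "continuous_map Y Y (\<lambda>y. inv\<^bsub>H\<^esub> (f g) \<otimes>\<^bsub>H\<^esub> y)"
      using that by (intro topological_group_continuous_map_left_mult[OF assms(1)]) simp
    then show ?thesis unfolding T_def by (rule openin_continuous_map_preimage[OF _ assms(4)])
  qed
  have "f g \<in> T g" if "g \<in> carrier G" for g
  proof -
    have "f g \<in> carrier H" "inv\<^bsub>H\<^esub> (f g) \<otimes>\<^bsub>H\<^esub> f g = \<one>\<^bsub>H\<^esub>" using that by simp_all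
    then show ?thesis unfolding T_def using assms(5) \<open>topspace Y = carrier H\<close> by simp
  qed
  then have "f ` carrier G \<subseteq> \<Union>(T ` carrier G)" by blast
  moreover have "\<forall>U\<in>T ` carrier G. openin Y U" using T_open by blast
  moreover have sub: "f ` carrier G \<subseteq> topspace Y"
    unfolding \<open>topspace Y = carrier H\<close> using f.hom_closed by blast
  moreover have "Lindelof_space (subtopology Y (f ` carrier G))"
    using assms(2) by (intro second_countable_imp_Lindelof_space second_countable_subtopology)
  ultimately have "\<exists>\<V>. countable \<V> \<and> \<V> \<subseteq> T ` carrier G \<and> f ` carrier G \<subseteq> \<Union>\<V>"
    unfolding Lindelof_space_subtopology_subset[OF sub] by simp
  then obtain C where C: "countable C" "C \<subseteq> carrier G" "f ` carrier G \<subseteq> \<Union>(T ` C)"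
    unfolding ex_countable_subset_image by blast
  have "g \<in> (\<Union>c\<in>C. c <#\<^bsub>G\<^esub> {g \<in> carrier G. f g \<in> V})" if g: "g \<in> carrier G" for g
  proof -
    obtain c where "c \<in> C" "f g \<in> T c" using C(3) g by blast
    then have c: "c \<in> carrier G" "inv\<^bsub>H\<^esub> (f c) \<otimes>\<^bsub>H\<^esub> f g \<in> V"
      using C(2) unfolding T_def by auto
    then have "g = c \<otimes>\<^bsub>G\<^esub> (inv\<^bsub>G\<^esub> c \<otimes>\<^bsub>G\<^esub> g)" "f (inv\<^bsub>G\<^esub> c \<otimes>\<^bsub>G\<^esub> g) \<in> V"
      using g by (simp_all add: f.G.m_assoc[symmetric] f.hom_inv)
    then have "g \<in> c <#\<^bsub>G\<^esub> {g \<in> carrier G. f g \<in> V}"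
      using g c(1) unfolding l_coset_def by blast
    with \<open>c \<in> C\<close> show ?thesis by blast
  qed
  with C(1,2) show ?thesis unfolding sigma_syndetic_def by blast
qed

lemma image_metric_nbhd_set_pow_subset:
  assumes "group_hom G H f" "Metric_space (carrier G) d"
    and left_invariant: "\<And>g x y. \<lbrakk>g \<in> carrier G; x \<in> carrier G; y \<in> carrier G\<rbrakk>
        \<Longrightarrow> d (g \<otimes>\<^bsub>G\<^esub> x) (g \<otimes>\<^bsub>G\<^esub> y) = d x y"
    and "A \<subseteq> carrier G" "f ` A \<subseteq> V" "f ` Metric_space.mball (carrier G) d \<one>\<^bsub>G\<^esub> \<epsilon> \<subseteq> V"
  shows "f ` metric_nbhd G d (set_pow G A k) \<epsilon> \<subseteq> set_pow H V (Suc k)"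
proof
  interpret f: group_hom G H f by (rule assms(1))
  interpret M: Metric_space "carrier G" d by (rule assms(2))
  fix y assume "y \<in> f ` metric_nbhd G d (set_pow G A k) \<epsilon>"
  then obtain g a where ga: "g \<in> carrier G" "a \<in> set_pow G A k" "d g a < \<epsilon>" "y = f g"
    unfolding metric_nbhd_def by blast
  have a: "a \<in> carrier G"
    using set_pow_subset_carrier[OF f.G.is_group assms(4)] ga(2) by blast
  have "d \<one>\<^bsub>G\<^esub> (inv\<^bsub>G\<^esub> a \<otimes>\<^bsub>G\<^esub> g) = d (inv\<^bsub>G\<^esub> a \<otimes>\<^bsub>G\<^esub> a) (inv\<^bsub>G\<^esub> a \<otimes>\<^bsub>G\<^esub> g)"
    using a by simp
  also have "\<dots> = d a g" using a ga(1) by (intro left_invariant) simp_all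
  also have "\<dots> = d g a" by (rule M.commute)
  finally have "inv\<^bsub>G\<^esub> a \<otimes>\<^bsub>G\<^esub> g \<in> M.mball \<one>\<^bsub>G\<^esub> \<epsilon>" using ga a by simp
  then have "f (inv\<^bsub>G\<^esub> a \<otimes>\<^bsub>G\<^esub> g) \<in> V" using assms(6) by blast
  moreover have "f a \<in> set_pow H V k"
    using image_set_pow_subset[OF assms(1,4)] set_pow_mono[OF assms(5)] ga(2) by blast
  moreover have "f g = f a \<otimes>\<^bsub>H\<^esub> f (inv\<^bsub>G\<^esub> a \<otimes>\<^bsub>G\<^esub> g)"
    using a ga(1) by (simp add: f.G.m_assoc[symmetric] flip: f.hom_mult)
  ultimately show "y \<in> set_pow H V (Suc k)" using ga(4) by (auto simp: set_mult_def)
qed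

lemma continuous_map_group_hom_at_one:
  assumes "topological_group G X" "topological_group H Y" "group_hom G H f"
    and at_one: "\<And>W. \<lbrakk>openin Y W; \<one>\<^bsub>H\<^esub> \<in> W\<rbrakk> \<Longrightarrow> \<exists>U. openin X U \<and> \<one>\<^bsub>G\<^esub> \<in> U \<and> f ` U \<subseteq> W"
  shows "continuous_map X Y f"
proof -
  interpret f: group_hom G H f by (rule assms(3))
  have X: "topspace X = carrier G" and Y: "topspace Y = carrier H"
    using assms(1,2) unfolding topological_group_def by auto
  have "openin X {x \<in> topspace X. f x \<in> W}" if W: "openin Y W" for W
  proof (subst openin_subopen, intro ballI)
    fix x assume x: "x \<in> {x \<in> topspace X. f x \<in> W}"
    then have "x \<in> carrier G" using X by simp
    have "openin Y {y \<in> topspace Y. f x \<otimes>\<^bsub>H\<^esub> y \<in> W}"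
      using topological_group_continuous_map_left_mult[OF assms(2)] \<open>x \<in> carrier G\<close> W
      by (intro openin_continuous_map_preimage) simp_all
    moreover have "\<one>\<^bsub>H\<^esub> \<in> {y \<in> topspace Y. f x \<otimes>\<^bsub>H\<^esub> y \<in> W}"
      using x \<open>x \<in> carrier G\<close> Y by simp
    ultimately obtain U where U: "openin X U" "\<one>\<^bsub>G\<^esub> \<in> U" "f ` U \<subseteq> {y \<in> topspace Y. f x \<otimes>\<^bsub>H\<^esub> y \<in> W}"
      using at_one by blast
    let ?T = "{z \<in> topspace X. inv\<^bsub>G\<^esub> x \<otimes>\<^bsub>G\<^esub> z \<in> U}"
    have "openin X ?T"
      using topological_group_continuous_map_left_mult[OF assms(1)] \<open>x \<in> carrier G\<close> U(1)
      by (intro openin_continuous_map_preimage) simp_all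
    moreover have "x \<in> ?T" using \<open>x \<in> carrier G\<close> X U(2) by simp
    moreover have "f z \<in> W" if "z \<in> ?T" for z
    proof -
      have "z \<in> carrier G" using that X by simp
      then have "f z = f x \<otimes>\<^bsub>H\<^esub> f (inv\<^bsub>G\<^esub> x \<otimes>\<^bsub>G\<^esub> z)"
        using \<open>x \<in> carrier G\<close> by (simp add: f.G.m_assoc[symmetric] flip: f.hom_mult)
      with that U(3) show ?thesis by auto
    qed
    ultimately show "\<exists>T. openin X T \<and> x \<in> T \<and> T \<subseteq> {x \<in> topspace X. f x \<in> W}"
      by (intro exI[of _ ?T]) auto
  qed
  then show ?thesis unfolding continuous_map_def using X Y by auto
qed

lemma Steinhaus_property_hom_nbhd_one:
  assumes "Steinhaus_property G X d" "Metric_space (carrier G) d"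
    and left_invariant: "\<And>g x y. \<lbrakk>g \<in> carrier G; x \<in> carrier G; y \<in> carrier G\<rbrakk>
        \<Longrightarrow> d (g \<otimes>\<^bsub>G\<^esub> x) (g \<otimes>\<^bsub>G\<^esub> y) = d x y"
    and "topological_group H Y" "second_countable Y" "group_hom G H f"
    and "continuous_map (Metric_space.mtopology (carrier G) d) Y f"
    and "openin Y W" "\<one>\<^bsub>H\<^esub> \<in> W"
  shows "\<exists>U. openin X U \<and> \<one>\<^bsub>G\<^esub> \<in> U \<and> f ` U \<subseteq> W"
proof -
  interpret M: Metric_space "carrier G" d by (rule assms(2))
  obtain k where k: "\<forall>A. A \<subseteq> carrier G \<longrightarrow> set_inv\<^bsub>G\<^esub> A = A \<longrightarrow> sigma_syndetic G A \<longrightarrow>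
      (\<forall>\<epsilon>>0. \<one>\<^bsub>G\<^esub> \<in> X interior_of (metric_nbhd G d (set_pow G A k) \<epsilon>))"
    using assms(1) unfolding Steinhaus_property_def by (elim exE)
  obtain V0 where V0: "openin Y V0" "\<one>\<^bsub>H\<^esub> \<in> V0" "set_pow H V0 (Suc k) \<subseteq> W"
    using topological_group_nbhd_one_set_pow[OF assms(4,8,9)] by blast
  obtain V where V: "openin Y V" "\<one>\<^bsub>H\<^esub> \<in> V" "V \<subseteq> V0" "\<And>y. y \<in> V \<Longrightarrow> inv\<^bsub>H\<^esub> y \<in> V"
    using topological_group_symmetric_nbhd[OF assms(4) V0(1,2)] by blast
  define A where "A = {g \<in> carrier G. f g \<in> V}"
  have A: "A \<subseteq> carrier G" "f ` A \<subseteq> V" unfolding A_def by auto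
  have "openin M.mtopology {x \<in> topspace M.mtopology. f x \<in> V}"
    using assms(7) V(1) by (rule openin_continuous_map_preimage)
  moreover have "\<one>\<^bsub>G\<^esub> \<in> {x \<in> topspace M.mtopology. f x \<in> V}"
    using V(2) group_hom.hom_one[OF assms(6)] group.is_monoid[OF group_hom.axioms(1)[OF assms(6)]]
    by (simp add: monoid.one_closed)
  ultimately obtain \<epsilon> where "\<epsilon> > 0" "M.mball \<one>\<^bsub>G\<^esub> \<epsilon> \<subseteq> {x \<in> topspace M.mtopology. f x \<in> V}"
    unfolding M.openin_mtopology by blast
  then have ball: "f ` M.mball \<one>\<^bsub>G\<^esub> \<epsilon> \<subseteq> V" by blast
  let ?N = "metric_nbhd G d (set_pow G A k) \<epsilon>"
  have "set_inv\<^bsub>G\<^esub> A = A" unfolding A_def by (rule set_inv_hom_preimage[OF assms(6) V(4)])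
  moreover have "sigma_syndetic G A"
    unfolding A_def by (rule sigma_syndetic_hom_preimage[OF assms(4,5,6) V(1,2)])
  ultimately have "\<one>\<^bsub>G\<^esub> \<in> X interior_of ?N" using k A(1) \<open>\<epsilon> > 0\<close> by blast
  moreover have "f ` ?N \<subseteq> set_pow H V (Suc k)"
    by (rule image_metric_nbhd_set_pow_subset[OF assms(6,2) left_invariant A ball])
  then have "f ` (X interior_of ?N) \<subseteq> W"
    using interior_of_subset[of X ?N] set_pow_mono[OF V(3)] V0(3) by blast
  ultimately show ?thesis by (intro exI[of _ "X interior_of ?N"]) simp
qed

theorem proposition4p3:
  fixes G :: "('a, 'b) monoid_scheme" and X :: "'a topology" and d :: "'a \<Rightarrow> 'a \<Rightarrow> real"
    and H :: "('c, 'e) monoid_scheme" and Y :: "'c topology" and \<phi> :: "'a \<Rightarrow> 'c"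
  assumes "Polish_topometric_group G X d"
    and "Steinhaus_property G X d"
    and "topological_group H Y"
    and "second_countable Y"
    and "\<phi> \<in> hom G H"
    and "continuous_map (Metric_space.mtopology (carrier G) d) Y \<phi>"
  shows "continuous_map X Y \<phi>"
proof -
  have G: "topological_group G X" "Metric_space (carrier G) d"
    and left_invariant: "\<And>g x y. \<lbrakk>g \<in> carrier G; x \<in> carrier G; y \<in> carrier G\<rbrakk>
        \<Longrightarrow> d (g \<otimes>\<^bsub>G\<^esub> x) (g \<otimes>\<^bsub>G\<^esub> y) = d x y"
    using assms(1) unfolding Polish_topometric_group_def Polish_group_def by blast+
  have "group_hom G H \<phi>"
    using G(1) assms(3,5) unfolding topological_group_def group_hom_def group_hom_axioms_def by blast
  show ?thesis
    using G(1) assms(3) \<open>group_hom G H \<phi>\<close>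
  proof (rule continuous_map_group_hom_at_one)
    show "\<exists>U. openin X U \<and> \<one>\<^bsub>G\<^esub> \<in> U \<and> \<phi> ` U \<subseteq> W" if "openin Y W" "\<one>\<^bsub>H\<^esub> \<in> W" for W
      by (rule Steinhaus_property_hom_nbhd_one[OF assms(2) G(2) left_invariant assms(3,4)
          \<open>group_hom G H \<phi>\<close> assms(6) that])
  qed
qed

end
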